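(* Let $\gamma>0$ and let $w_\gamma$ be the function defined below. Define $$W_\gamma(t)=\begin{cases}\int_t^\infty w_\gamma(\xi)\,d\xi,& t\ge0,\\ -\int_{-\infty}^t w_\gamma(\xi)\,d\xi,& t<0.\end{cases}$$ Then $W_\gamma$ is a bounded, odd function in $L^1(\mathbb{R})$ with: (i) $|W_\gamma(t)|$ is continuous and monotone decreasing for $t\ge0$; in particular $\|W_\gamma\|_\infty=W_\gamma(0)=1/2$. (ii) $|W_\gamma(t)|\le G^{(W)}(\gamma|t|)$, where for $\eta\ge0$, $G^{(W)}(\eta)=1/2$ if $0\le\eta\le\eta^*$ and $G^{(W)}(\eta)=35\mathrm{e}^2\eta^4u_{2/7}(\eta)$ if $\eta>\eta^*$, with $\eta^*$ the largest real solution of $35\mathrm{e}^2\eta^4u_{2/7}(\eta)=1/2$. (iii) There is a constant $K$ (independent of $\gamma$) such that $\|W_\gamma\|_1\le K/\gamma$. (iv) For $t>0$ let $I_\gamma(t)=\int_t^\infty W_\gamma(\xi)\,d\xi$. Then there is $\zeta^*>0$ such that $|I_\gamma(t)|\le G^{(I)}(\gamma|t|)$, where for $\zeta\ge0$, $$G^{(I)}(\zeta)=\frac1\gamma\cdot\begin{cases}K/2,&0\le\zeta\le\zeta^*,\\130\,\mathrm{e}^2\zeta^{10}u_{2/7}(\zeta),&\zeta>\zeta^*,\end{cases}$$ with $K$ as in (iii).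
   Context: For $a>0$ and $\eta>1$, $u_a(\eta)=\exp(-a\eta/\ln^2\eta)$. The function $w_\gamma$ is defined as follows: let $a_n=a_1(n\ln^2n)^{-1}$ for $n\ge2$ with $a_1>0$ chosen so that $\sum_{n\ge1}a_n=\gamma/2$, and $w_\gamma(t)=c_\gamma\prod_{n=1}^\infty(\sin(a_nt)/(a_nt))^2$ with $c_\gamma>0$ chosen so that $\int_{\mathbb R} w_\gamma=1$. It is even, non-negative, integrable, its Fourier transform vanishes outside $[-\gamma,\gamma]$, and $w_\gamma(t)\le 2(\mathrm{e}\gamma)^2t\exp(-\frac27\gamma t/\ln^2(\gamma t))$ for $t\ge\mathrm{e}^{1/\sqrt2}/\gamma$. *)

theory Defs
  imports "HOL-Analysis.Analysis"
begin

definition u :: "real \<Rightarrow> real \<Rightarrow> real" where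
  "u a \<eta> = exp (- a * \<eta> / (ln \<eta>)^2)"

definition sinc :: "real \<Rightarrow> real" where
  "sinc x = (if x = 0 then 1 else sin x / x)"

text \<open>S = sum over n \<ge> 2 of 1/(n ln^2 n); a_1 is chosen so that a_1 (1 + S) = gamma/2\<close>
definition aseq :: "real \<Rightarrow> nat \<Rightarrow> real" where
  "aseq \<gamma> n =
     (let a1 = (\<gamma> / 2) / (1 + (\<Sum>k. 1 / (real (k + 2) * (ln (real (k + 2)))^2)))
      in if n = 1 then a1 else a1 / (real n * (ln (real n))^2))"

definition wprod :: "real \<Rightarrow> real \<Rightarrow> real" where
  "wprod \<gamma> t = (\<Prod>n. (sinc (aseq \<gamma> (Suc n) * t))^2)"

definition cgamma :: "real \<Rightarrow> real" where
  "cgamma \<gamma> = 1 / (LINT t|lborel. wprod \<gamma> t)"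

definition w :: "real \<Rightarrow> real \<Rightarrow> real" where
  "w \<gamma> t = cgamma \<gamma> * wprod \<gamma> t"

definition W :: "real \<Rightarrow> real \<Rightarrow> real" where
  "W \<gamma> t = (if t \<ge> 0 then (LINT \<xi>:{t..}|lborel. w \<gamma> \<xi>)
              else - (LINT \<xi>:{..t}|lborel. w \<gamma> \<xi>))"

definition etaStar :: real where
  "etaStar = (GREATEST \<eta>. \<eta> > 1 \<and> 35 * exp 2 * \<eta>^4 * u (2/7) \<eta> = 1/2)"

definition GW :: "real \<Rightarrow> real" where
  "GW \<eta> = (if \<eta> \<le> etaStar then 1/2 else 35 * exp 2 * \<eta>^4 * u (2/7) \<eta>)"

definition Iint :: "real \<Rightarrow> real \<Rightarrow> real" where
  "Iint \<gamma> t = (LINT \<xi>:{t..}|lborel. W \<gamma> \<xi>)"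

definition GI :: "real \<Rightarrow> real \<Rightarrow> real \<Rightarrow> real \<Rightarrow> real" where
  "GI K \<zeta>s \<gamma> \<zeta> = (1 / \<gamma>) * (if \<zeta> \<le> \<zeta>s then K / 2 else 130 * exp 2 * \<zeta>^10 * u (2/7) \<zeta>)"

end

theory Submission
  imports Defs "HOL-Real_Asymp.Real_Asymp"
begin

(*
  Everything reduces to gamma = 1 by scaling: a_n(gamma) = gamma a_n(1), hence
  w_gamma(t) = gamma w_1(gamma t), W_gamma(t) = W_1(gamma t) and I_gamma(t) = I_1(gamma t) / gamma.
  For gamma = 1 we study the unnormalised product p(t) = prod_n sinc(a_n t)^2:
  (1) the series sum_{n>=2} 1/(n ln^2 n) is at most 5/2 (compare with the telescoping sum of
      1/ln n), so 1/7 <= a_1 <= 1/2, and sum a_n^2 <= 1/2;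
  (2) 1 - t^2/6 <= p(t) <= min(1, 1/(a_1 t)^2), hence p is integrable with integral >= 1,
      and w_1 = c_1 p with 0 < c_1 <= 1;
  (3) truncating the product at N ~ a_1 t / ln^2(a_1 t) and using sinc^2 y <= 1/y^2 gives
      the decay p(t) <= e^4/4 t^2 u_{2/7}(t) for t >= 10000;
  (4) the functions F_k(s) = s^2 ln^k s u_{2/7}(s) satisfy F_{k-2} <= 14 (-F_k)' beyond 10000,
      so their tail integrals obey int_a^oo F_{k-2} <= 14 F_k(a).
  Consequently W_1(t) = int_t^oo w_1 (t >= 0) is 1-Lipschitz, antitone, W_1(0) = 1/2 because
  w_1 is even, and W_1(t) <= 7/2 e^4 F_2(t), I_1(t) <= 49 e^4 F_4(t) for t >= 10000.  These
  tails lie below the envelopes G^(W), G^(I), whose threshold eta* is at least 10000.  The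
  theorem then holds with K = 2 ||W_1||_1 and zeta* = 10000.
*)

definition S_series :: real where
  "S_series = (\<Sum>k. 1 / (real (k + 2) * (ln (real (k + 2)))^2))"

lemma inverse_n_ln_sq_le_telescope:
  fixes n :: nat assumes "n \<ge> 3"
  shows "1 / (real n * (ln (real n))^2) \<le> 1 / ln (real n - 1) - 1 / ln (real n)"
proof -
  have pos1: "ln (real n - 1) > 0" and pos2: "ln (real n) > 0" using assms by simp_all
  have mono: "ln (real n - 1) \<le> ln (real n)" using assms by simp
  have step: "ln (real n) - ln (real n - 1) \<ge> 1 / real n"
  proof -
    have "ln ((real n - 1) / real n) \<le> (real n - 1) / real n - 1"
      using assms by (intro ln_le_minus_one) auto
    moreover have "ln ((real n - 1) / real n) = ln (real n - 1) - ln (real n)"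
      using assms by (subst ln_div) auto
    moreover have "(real n - 1) / real n - 1 = - 1 / real n" using assms by (simp add: field_simps)
    ultimately show ?thesis by simp
  qed
  have "1 / ln (real n - 1) - 1 / ln (real n)
      = (ln (real n) - ln (real n - 1)) / (ln (real n - 1) * ln (real n))"
    using pos1 pos2 by (simp add: field_simps)
  also have "\<dots> \<ge> (1 / real n) / (ln (real n) * ln (real n))"
    using pos1 pos2 mono step assms
    by (intro frac_le) (auto intro: mult_right_mono mult_pos_pos)
  finally show ?thesis by (simp add: power2_eq_square mult.assoc)
qed

lemma S_series_summable: "summable (\<lambda>k. 1 / (real (k + 2) * (ln (real (k + 2)))^2))"
  and S_series_bounds: "0 \<le> S_series" "S_series \<le> 5/2"
proof -
  define t where "t k = 1 / (real (k + 2) * (ln (real (k + 2)))^2)" for k :: nat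
  define f where "f k = 1 / ln (real k + 3)" for k :: nat
  have t_nonneg: "t k \<ge> 0" for k unfolding t_def by simp
  have tel: "(\<lambda>k. f k - f (Suc k)) sums (f 0 - 0)"
    by (rule telescope_sums') (unfold f_def, real_asymp)
  have t_le: "t (k + 2) \<le> f k - f (Suc k)" for k
    using inverse_n_ln_sq_le_telescope[of "k + 4"] unfolding t_def f_def by (simp add: add.commute)
  have sm2: "summable (\<lambda>k. t (k + 2))"
    by (rule summable_comparison_test[of _ "\<lambda>k. f k - f (Suc k)"])
       (use t_le t_nonneg sums_summable[OF tel] in auto)
  hence sm: "summable t" using summable_iff_shift by blast
  have tail: "(\<Sum>k. t (k + 2)) \<le> f 0"
    using suminf_le[OF _ sm2 sums_summable[OF tel]] t_le sums_unique[OF tel] by force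
  have split: "suminf t = (\<Sum>k. t (k + 2)) + t 0 + t 1"
    using suminf_split_initial_segment[OF sm, of 2] by (simp add: numeral_2_eq_2)
  have ln3: "ln (3::real) \<ge> 1"
    using exp_le by (subst ln_ge_iff) auto
  have t0: "t 0 \<le> 9/8"
  proof -
    have "(2/3)^2 \<le> (ln (2::real))^2" using ln2_ge_two_thirds by (intro power_mono) auto
    thus ?thesis unfolding t_def by (simp add: field_simps)
  qed
  have t1: "t 1 \<le> 1/3"
    using ln3 unfolding t_def by (simp add: field_simps one_le_power)
  have f0: "f 0 \<le> 1" unfolding f_def using ln3 by simp
  have S_eq: "S_series = suminf t" unfolding S_series_def t_def ..
  show "summable (\<lambda>k. 1 / (real (k + 2) * (ln (real (k + 2)))^2))" using sm unfolding t_def .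
  show "S_series \<le> 5/2" using split tail t0 t1 f0 unfolding S_eq by simp
  show "0 \<le> S_series" unfolding S_eq using sm t_nonneg by (intro suminf_nonneg)
qed

lemma cos_ge_1_minus_sq_half: "cos (x::real) \<ge> 1 - x^2/2"
proof -
  have "cos x = 1 - 2 * (sin (x/2))^2" using cos_double_sin[of "x/2"] by simp
  moreover have "(sin (x/2))^2 \<le> (x/2)^2"
    using abs_sin_x_le_abs_x[of "x/2"] by (metis abs_le_square_iff)
  ultimately show ?thesis by (simp add: power_divide)
qed

lemma sin_ge_x_minus_cube_sixth: assumes "(x::real) \<ge> 0" shows "sin x \<ge> x - x^3/6"
proof -
  let ?g = "\<lambda>x::real. sin x - x + x^3/6"
  have "?g 0 \<le> ?g x"
  proof (rule DERIV_nonneg_imp_nondecreasing[OF assms])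
    fix y :: real
    show "\<exists>d. DERIV ?g y :> d \<and> d \<ge> 0"
      using cos_ge_1_minus_sq_half[of y]
      by (intro exI[of _ "cos y - 1 + y^2/2"])
         (auto intro!: derivative_eq_intros simp: algebra_simps power2_eq_square power3_eq_cube)
  qed
  thus ?thesis by simp
qed

lemma sinc_minus: "sinc (-y) = sinc y" unfolding sinc_def by simp

lemma sinc_sq_le_1: "(sinc y)^2 \<le> 1"
  unfolding sinc_def using abs_sin_x_le_abs_x[of y]
  by (auto simp: abs_square_le_1 abs_divide divide_le_eq_1)

lemma sinc_sq_le_inverse_sq: assumes "y \<noteq> 0" shows "(sinc y)^2 \<le> 1 / y^2"
proof -
  have "(sinc y)^2 = (sin y)^2 / y^2" using assms unfolding sinc_def by (simp add: power_divide)
  also have "\<dots> \<le> 1 / y^2" using assms by (intro divide_right_mono) (auto simp: abs_square_le_1)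
  finally show ?thesis .
qed

text \<open>Near the origin \<open>sinc\<^sup>2\<close> stays close to \<open>1\<close>; this gives the lower bound on \<open>\<integral> w\<close>.\<close>
lemma sinc_sq_ge: "1 - y^2/3 \<le> (sinc y)^2"
proof (cases "y^2 \<le> 6")
  case False thus ?thesis using zero_le_power2[of "sinc y"] by linarith
next
  case True
  have sinc_ge: "sinc y \<ge> 1 - y^2/6"
  proof (cases "y = 0")
    case True thus ?thesis unfolding sinc_def by simp
  next
    case False
    have "sinc y = sin \<bar>y\<bar> / \<bar>y\<bar>" using False unfolding sinc_def by (cases "y \<ge> 0") auto
    also have "\<dots> \<ge> (\<bar>y\<bar> - \<bar>y\<bar>^3/6) / \<bar>y\<bar>"
      using sin_ge_x_minus_cube_sixth[of "\<bar>y\<bar>"] by (intro divide_right_mono) auto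
    also have "(\<bar>y\<bar> - \<bar>y\<bar>^3/6) / \<bar>y\<bar> = 1 - y^2/6" using False
      by (simp add: field_simps power2_eq_square power3_eq_cube)
    finally show ?thesis .
  qed
  have "(1 - y^2/6)^2 \<le> (sinc y)^2" using True sinc_ge by (intro power_mono) auto
  moreover have "(1 - y^2/6)^2 = 1 - y^2/3 + (y^2/6)^2" by (simp add: power2_eq_square field_simps)
  ultimately show ?thesis using zero_le_power2[of "y^2/6"] by linarith
qed

definition A1 :: real where "A1 = (1/2) / (1 + S_series)"

lemma A1_bounds: "A1 \<ge> 1/7" "A1 \<le> 1/2" "A1 > 0"
  using S_series_bounds unfolding A1_def by (auto simp: field_simps)

lemma aseq_1_eq: "aseq 1 n = (if n = 1 then A1 else A1 / (real n * (ln (real n))^2))"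
  unfolding aseq_def A1_def S_series_def Let_def by simp

lemma aseq_scale: "aseq \<gamma> n = \<gamma> * aseq 1 n"
  unfolding aseq_def Let_def by (simp add: field_simps)

lemma aseq_1_pos: "n \<ge> 1 \<Longrightarrow> aseq 1 n > 0"
  unfolding aseq_1_eq using A1_bounds by (auto simp: ln_gt_zero)

lemma aseq_1_le: assumes "n \<ge> 1" shows "aseq 1 n \<le> 2 * A1"
proof (cases "n = 1")
  case True thus ?thesis unfolding aseq_1_eq using A1_bounds by simp
next
  case False
  hence n2: "n \<ge> 2" using assms by simp
  have "ln (real n) \<ge> ln 2" using n2 by simp
  hence "ln (real n) \<ge> 2/3" using ln2_ge_two_thirds by linarith
  hence "(2/3)^2 \<le> (ln (real n))^2" by (intro power_mono) auto
  hence "real n * (ln (real n))^2 \<ge> 2 * (4/9)" using n2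
    by (intro mult_mono) (auto simp: power2_eq_square)
  thus ?thesis unfolding aseq_1_eq using False A1_bounds by (simp add: field_simps)
qed

lemma aseq_1_sums: "(\<lambda>n. aseq 1 (Suc n)) sums (1/2)"
proof -
  have "(\<lambda>k. A1 * (1 / (real (k + 2) * (ln (real (k + 2)))^2))) sums (A1 * S_series)"
    unfolding S_series_def by (intro sums_mult summable_sums S_series_summable)
  hence "(\<lambda>k. aseq 1 (Suc (Suc k))) sums (A1 * S_series)"
    unfolding aseq_1_eq by (simp add: add.commute)
  hence "(\<lambda>n. aseq 1 (Suc n)) sums (A1 * S_series + aseq 1 (Suc 0))"
    by (subst sums_Suc_iff[symmetric]) simp
  moreover have "A1 * S_series + aseq 1 (Suc 0) = 1/2"
    unfolding aseq_1_eq A1_def using S_series_bounds by (simp add: field_simps)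
  ultimately show ?thesis by simp
qed

lemma aseq_1_sq_summable: "summable (\<lambda>n. (aseq 1 (Suc n))^2)"
  and aseq_1_sq_suminf: "(\<Sum>n. (aseq 1 (Suc n))^2) \<le> 1/2"
proof -
  have le: "(aseq 1 (Suc n))^2 \<le> 2 * A1 * aseq 1 (Suc n)" for n
    using aseq_1_le[of "Suc n"] aseq_1_pos[of "Suc n"]
    by (auto simp: power2_eq_square intro!: mult_right_mono)
  have sm: "summable (\<lambda>n. 2 * A1 * aseq 1 (Suc n))"
    using aseq_1_sums by (intro summable_mult sums_summable) auto
  show sq: "summable (\<lambda>n. (aseq 1 (Suc n))^2)"
    by (rule summable_comparison_test[OF _ sm]) (use le in auto)
  have "(\<Sum>n. (aseq 1 (Suc n))^2) \<le> (\<Sum>n. 2 * A1 * aseq 1 (Suc n))"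
    by (rule suminf_le[OF le sq sm])
  also have "\<dots> = 2 * A1 * (1/2)" using aseq_1_sums by (simp add: suminf_mult sums_iff)
  also have "\<dots> \<le> 1/2" using A1_bounds by simp
  finally show "(\<Sum>n. (aseq 1 (Suc n))^2) \<le> 1/2" .
qed


section \<open>Infinite products of factors in \<open>[0, 1]\<close>\<close>

lemma prod_atMost_antimono:
  fixes f :: "nat \<Rightarrow> real"
  assumes "\<And>i. 0 \<le> f i" "\<And>i. f i \<le> 1" "M \<le> N"
  shows "(\<Prod>i\<le>N. f i) \<le> (\<Prod>i\<le>M. f i)"
  using assms(3)
proof (induction N rule: dec_induct)
  case (step n)
  have "(\<Prod>i\<le>Suc n. f i) \<le> (\<Prod>i\<le>n. f i)"
    using assms(1,2) by (auto simp: atMost_Suc intro!: mult_left_le_one_le prod_nonneg)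
  with step.IH show ?case by linarith
qed simp

lemma prod_ge_1_minus_sum:
  fixes f :: "nat \<Rightarrow> real"
  assumes "\<And>i. 0 \<le> f i" "\<And>i. f i \<le> 1"
  shows "1 - (\<Sum>i\<le>N. 1 - f i) \<le> (\<Prod>i\<le>N. f i)"
proof (induction N)
  case (Suc N)
  let ?P = "\<Prod>i\<le>N. f i" and ?s = "\<Sum>i\<le>N. 1 - f i"
  have "?s \<ge> 0" using assms by (intro sum_nonneg) auto
  hence "(1 - ?s) * f (Suc N) \<ge> 1 - ?s - (1 - f (Suc N))"
    using assms[of "Suc N"] by (simp add: algebra_simps mult_left_le_one_le)
  moreover have "?P * f (Suc N) \<ge> (1 - ?s) * f (Suc N)" using Suc assms by (intro mult_right_mono) auto
  ultimately show ?case by (simp add: atMost_Suc algebra_simps)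
qed simp

lemma convergent_prod_unit_interval:
  fixes f :: "nat \<Rightarrow> real"
  assumes "\<And>i. 0 \<le> f i" "\<And>i. f i \<le> 1" "summable (\<lambda>i. 1 - f i)"
  shows "convergent_prod f"
proof (intro abs_convergent_prod_imp_convergent_prod summable_imp_abs_convergent_prod)
  have "norm (f i - 1) = 1 - f i" for i using assms(2)[of i] by simp
  thus "summable (\<lambda>i. norm (f i - 1))" using assms(3) by simp
qed

lemma prodinf_unit_interval_bounds:
  fixes f :: "nat \<Rightarrow> real"
  assumes f01: "\<And>i. 0 \<le> f i" "\<And>i. f i \<le> 1" and sm: "summable (\<lambda>i. 1 - f i)"
  shows "prodinf f \<le> (\<Prod>i\<le>N. f i)" "0 \<le> prodinf f" "1 - (\<Sum>i. 1 - f i) \<le> prodinf f"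
proof -
  note lim = convergent_prod_LIMSEQ[OF convergent_prod_unit_interval[OF f01 sm]]
  show "prodinf f \<le> (\<Prod>i\<le>N. f i)"
    by (rule LIMSEQ_le_const2[OF lim]) (intro exI[where x=N] allI impI prod_atMost_antimono f01)
  show "0 \<le> prodinf f"
    by (rule LIMSEQ_le_const[OF lim]) (use f01 in \<open>auto intro: prod_nonneg\<close>)
  show "1 - (\<Sum>i. 1 - f i) \<le> prodinf f"
  proof (rule LIMSEQ_le_const[OF lim], intro exI allI impI)
    fix N
    have "(\<Sum>i\<le>N. 1 - f i) \<le> (\<Sum>i. 1 - f i)" using sm f01 by (intro sum_le_suminf) auto
    moreover have "1 - (\<Sum>i\<le>N. 1 - f i) \<le> (\<Prod>i\<le>N. f i)"
      by (rule prod_ge_1_minus_sum) (fact f01)+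
    ultimately show "1 - (\<Sum>i. 1 - f i) \<le> (\<Prod>i\<le>N. f i)" by linarith
  qed
qed

definition fac :: "real \<Rightarrow> nat \<Rightarrow> real" where
  "fac t n = (sinc (aseq 1 (Suc n) * t))^2"

abbreviation p :: "real \<Rightarrow> real" where "p \<equiv> wprod 1"

lemma p_eq_prodinf: "p t = prodinf (fac t)"
  unfolding wprod_def fac_def ..

lemma wprod_scale: "wprod \<gamma> t = p (\<gamma> * t)"
  unfolding wprod_def by (simp add: aseq_scale[of \<gamma>] mult_ac)

lemma fac_bounds: "0 \<le> fac t n" "fac t n \<le> 1"
  unfolding fac_def by (simp_all add: sinc_sq_le_1)

lemma one_minus_fac_le: "1 - fac t n \<le> (aseq 1 (Suc n))^2 * (t^2 / 3)"
  unfolding fac_def using sinc_sq_ge[of "aseq 1 (Suc n) * t"] by (simp add: power_mult_distrib)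

lemma one_minus_fac_summable: "summable (\<lambda>n. 1 - fac t n)"
  by (rule summable_comparison_test[of _ "\<lambda>n. (aseq 1 (Suc n))^2 * (t^2 / 3)"])
     (use fac_bounds one_minus_fac_le in \<open>auto intro: summable_mult2 aseq_1_sq_summable\<close>)

lemmas p_bounds = prodinf_unit_interval_bounds[OF fac_bounds one_minus_fac_summable,
    folded p_eq_prodinf]

lemma p_le_partial: "p t \<le> (\<Prod>i\<le>N. fac t i)" by (rule p_bounds(1))
lemma p_nonneg: "0 \<le> p t" by (rule p_bounds(2))
lemma p_le_1: "p t \<le> 1" using p_le_partial[of t 0] fac_bounds[of t 0] by simp

lemma p_ge: "1 - t^2 / 6 \<le> p t"
proof -
  have "(\<Sum>i. 1 - fac t i) \<le> (\<Sum>i. (aseq 1 (Suc i))^2 * (t^2/3))"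
    using one_minus_fac_le one_minus_fac_summable aseq_1_sq_summable
    by (intro suminf_le) (auto intro: summable_mult2)
  also have "\<dots> = (\<Sum>i. (aseq 1 (Suc i))^2) * (t^2/3)"
    using aseq_1_sq_summable by (rule suminf_mult2[symmetric])
  also have "\<dots> \<le> (1/2) * (t^2/3)" using aseq_1_sq_suminf by (intro mult_right_mono) auto
  finally show ?thesis using p_bounds(3)[of t] by simp
qed

lemma p_even: "p (-t) = p t"
  unfolding p_eq_prodinf fac_def by (simp add: sinc_minus[of "_ * t", symmetric])

lemma sinc_measurable[measurable]: "sinc \<in> borel_measurable borel"
  unfolding sinc_def by measurable

lemma p_measurable[measurable]: "p \<in> borel_measurable borel"
proof (rule borel_measurable_LIMSEQ_real)
  show "(\<lambda>N. \<Prod>i\<le>N. fac t i) \<longlonglongrightarrow> p t" for t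
    unfolding p_eq_prodinf
    by (rule convergent_prod_LIMSEQ[OF convergent_prod_unit_interval[OF fac_bounds one_minus_fac_summable]])
  show "(\<lambda>t. \<Prod>i\<le>N. fac t i) \<in> borel_measurable borel" for N
    unfolding fac_def by measurable
qed

text \<open>Keeping only the first factor: \<open>p t \<le> 1 / (a\<^sub>1 t)\<^sup>2\<close>, hence \<open>p t \<le> 100 / (1 + t\<^sup>2)\<close>.\<close>
lemma p_le_inverse_sq: assumes "t \<noteq> 0" shows "p t \<le> 1 / (A1 * t)^2"
  using p_le_partial[of t 0] sinc_sq_le_inverse_sq[of "A1 * t"] A1_bounds assms
  by (simp add: fac_def aseq_1_eq)

lemma p_le_rational: "p t \<le> 100 / (1 + t^2)"
proof (cases "t^2 \<le> 1")
  case True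
  hence "100 / (1 + t^2) \<ge> 100 / 2" by (intro divide_left_mono) (auto simp: add_pos_nonneg)
  thus ?thesis using p_le_1[of t] by simp
next
  case False
  hence t0: "t \<noteq> 0" by auto
  have "(1/A1)^2 \<le> 7^2" using A1_bounds by (intro power_mono) (auto simp: field_simps)
  hence "(1/A1)^2 / t^2 \<le> 49 / t^2" by (intro divide_right_mono) auto
  hence "1 / (A1 * t)^2 \<le> 49 / t^2" by (simp add: power_mult_distrib power_divide)
  also have "\<dots> \<le> 100 / (1 + t^2)"
  proof -
    have "49 * (1 + t^2) \<le> 100 * t^2" using False by simp
    thus ?thesis using t0 by (simp add: divide_simps add_pos_nonneg)
  qed
  finally show ?thesis using p_le_inverse_sq[OF t0] by linarith
qed

lemma integrable_inverse_1_plus_sq: "integrable lborel (\<lambda>t::real. inverse (1 + t^2))"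
proof -
  have "set_integrable lborel (einterval (-\<infinity>) \<infinity>) (\<lambda>t::real. inverse (1 + t^2))"
  proof (rule interval_integral_FTC_nonneg(1)[where F=arctan and A="-pi/2" and B="pi/2"])
    show "((arctan \<circ> real_of_ereal) \<longlongrightarrow> - pi / 2) (at_right (- \<infinity>))"
      unfolding ereal_tendsto_simps using tendsto_arctan_at_bot by simp
    show "((arctan \<circ> real_of_ereal) \<longlongrightarrow> pi / 2) (at_left \<infinity>)"
      unfolding ereal_tendsto_simps using tendsto_arctan_at_top by simp
  qed (auto intro!: derivative_eq_intros continuous_intros
      simp: add_nonneg_eq_0_iff field_simps power2_eq_square)
  thus ?thesis by (simp add: set_integrable_def einterval_def)
qed

lemma p_integrable: "integrable lborel p"
proof (rule Bochner_Integration.integrable_bound)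
  show "integrable lborel (\<lambda>t::real. 100 * inverse (1 + t^2))"
    using integrable_inverse_1_plus_sq by simp
  show "AE t in lborel. norm (p t) \<le> norm (100 * inverse (1 + t^2))"
    using p_le_rational p_nonneg by (auto simp: field_simps)
qed simp

text \<open>On \<open>[-1, 1]\<close> we have \<open>p \<ge> 1/2\<close>, so \<open>\<integral> p \<ge> 1\<close>; in particular \<open>c\<^sub>1 \<le> 1\<close>.\<close>
lemma p_integral_ge_1: "(LINT t|lborel. p t) \<ge> 1"
proof -
  have "(LINT t|lborel. indicator {-1..1::real} t * (1/2::real)) \<le> (LINT t|lborel. p t)"
  proof (rule integral_mono'[OF p_integrable])
    fix t :: real
    show "indicator {-1..1} t * (1/2) \<le> p t"
    proof (cases "t \<in> {-1..1}")
      case True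
      hence "t^2 \<le> 1" by (auto simp: abs_square_le_1)
      thus ?thesis using True p_ge[of t] by simp
    qed (simp add: p_nonneg)
  qed (simp add: p_nonneg)
  moreover have "(LINT t|lborel. indicator {-1..1::real} t * (1/2::real)) = 1"
    by (simp add: integral_mult_left_zero)
  ultimately show ?thesis by simp
qed

lemma cgamma_1_bounds: "0 < cgamma 1" "cgamma 1 \<le> 1"
  unfolding cgamma_def using p_integral_ge_1 by auto

lemma lborel_integral_scale:
  fixes f :: "real \<Rightarrow> real" assumes "\<gamma> > 0"
  shows "(LINT x|lborel. f x) = (LINT x|lborel. \<gamma> * f (\<gamma> * x))"
  using lborel_integral_real_affine[of \<gamma> f 0] assms by simp

lemma cgamma_scale: assumes "\<gamma> > 0" shows "cgamma \<gamma> = \<gamma> * cgamma 1"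
proof -
  have "wprod \<gamma> = (\<lambda>t. p (\<gamma> * t))" using wprod_scale by blast
  hence "(LINT t|lborel. wprod \<gamma> t) = (LINT t|lborel. p t) / \<gamma>"
    using lborel_integral_scale[OF assms, of p] assms by simp
  thus ?thesis unfolding cgamma_def using assms by simp
qed

lemma w_scale: "\<gamma> > 0 \<Longrightarrow> w \<gamma> t = \<gamma> * w 1 (\<gamma> * t)"
  unfolding w_def using cgamma_scale[of \<gamma>] wprod_scale[of \<gamma> t] by simp

abbreviation w1 :: "real \<Rightarrow> real" where "w1 \<equiv> w 1"

lemma w1_nonneg: "0 \<le> w1 t" unfolding w_def using cgamma_1_bounds p_nonneg by simp
lemma w1_le_p: "w1 t \<le> p t"
  unfolding w_def using cgamma_1_bounds p_nonneg by (simp add: mult_left_le_one_le)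
lemma w1_le_1: "w1 t \<le> 1" using w1_le_p[of t] p_le_1[of t] by simp
lemma w1_even: "w1 (-t) = w1 t" unfolding w_def using p_even by simp
lemma w1_measurable[measurable]: "w1 \<in> borel_measurable borel" unfolding w_def by measurable
lemma w1_integrable: "integrable lborel w1" unfolding w_def using p_integrable by simp
lemma w1_integral: "(LINT t|lborel. w1 t) = 1"
  unfolding w_def cgamma_def using p_integral_ge_1 by simp
lemma w1_set_integrable: "A \<in> sets lborel \<Longrightarrow> set_integrable lborel A w1"
  unfolding set_integrable_def by (intro integrable_mult_indicator w1_integrable)


section \<open>Decay of \<open>p\<close>\<close>

lemma exp_2_bounds: "6 \<le> exp (2::real)" "exp (2::real) \<le> 8"
proof -
  have "(1 + 2 / real (10::nat)) ^ 10 \<le> exp (2::real)"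
    by (rule exp_ge_one_plus_x_over_n_power_n) auto
  moreover have "(1 + 2 / real (10::nat)) ^ 10 \<ge> (6::real)" by (simp add: power_def)
  ultimately show "6 \<le> exp (2::real)" by linarith
  have "exp (2::real) = (exp 1)^2" by (simp add: exp_of_nat_mult[symmetric])
  also have "\<dots> \<le> (272/100)^2" using e_less_272 by (intro power_mono) auto
  finally show "exp (2::real) \<le> 8" by (simp add: power2_eq_square)
qed

lemma ln_ge_9: assumes "(s::real) \<ge> 10000" shows "ln s \<ge> 9"
proof -
  have "exp (9::real) = (exp 1)^9" by (simp add: exp_of_nat_mult[symmetric])
  also have "\<dots> \<le> (272/100)^9" using e_less_272 by (intro power_mono) auto
  finally have "exp (9::real) \<le> s" using assms by (simp add: power_divide)
  thus ?thesis using assms by (subst ln_ge_iff) auto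
qed

lemma ln_ge_1: "(s::real) \<ge> 3 \<Longrightarrow> ln s \<ge> 1"
  using exp_le by (subst ln_ge_iff) auto

lemma ln_sq_le_sqrt: assumes "(x::real) \<ge> 1" shows "(ln x)^2 \<le> 8/3 * sqrt x"
proof -
  let ?y = "sqrt (sqrt x)"
  have y0: "?y > 0" and y1: "?y \<ge> 1" using assms by simp_all
  have "?y ^ 4 = (?y^2)^2" by (simp flip: power_mult)
  hence "?y ^ 4 = x" using assms by simp
  hence lx: "ln x = 4 * ln ?y" using y0 by (metis ln_realpow of_nat_numeral)
  have "ln (?y / exp 1) \<le> ?y / exp 1 - 1" using y0 by (intro ln_le_minus_one) auto
  hence "ln ?y \<le> ?y / exp 1" using y0 by (simp add: ln_div)
  hence "(ln ?y)^2 \<le> (?y / exp 1)^2" using y1 by (intro power_mono) auto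
  also have "\<dots> = sqrt x / exp 2"
    using assms by (simp add: power_divide exp_double[symmetric] power2_eq_square[of "exp 1"])
  also have "\<dots> \<le> sqrt x / 6" using exp_2_bounds(1) assms by (intro divide_left_mono) auto
  finally show ?thesis unfolding lx by (simp add: power_mult_distrib)
qed

lemma sum_ln_le:
  "N \<ge> 1 \<Longrightarrow> (\<Sum>n=1..N. ln (real n)) \<le> real N * ln (real N) - real N + 1 + ln (real N)"
proof (induction N rule: dec_induct)
  case (step N)
  have N1: "real N \<ge> 1" using step by simp
  have "ln (real N / real (Suc N)) \<le> real N / real (Suc N) - 1"
    using N1 by (intro ln_le_minus_one) auto
  hence "ln (real N) - ln (real (Suc N)) \<le> - 1 / real (Suc N)"
    using N1 by (simp add: ln_div field_simps)
  hence "real (Suc N) * (ln (real (Suc N)) - ln (real N)) \<ge> 1"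
    by (simp add: field_simps del: of_nat_Suc)
  thus ?case using step by (simp add: algebra_simps)
qed simp

abbreviation E :: "real \<Rightarrow> real" where "E \<equiv> u (2/7)"

lemma E_eq: "E s = exp (- (2/7) * s / (ln s)^2)" unfolding u_def ..

lemma p_le_exp_sum:
  assumes t: "t > 0" and N: "N \<ge> 1"
  shows "p t \<le> exp (-2 * (\<Sum>n=1..N. ln (aseq 1 n * t)))"
proof -
  have "p t \<le> (\<Prod>i\<le>N-1. fac t i)" by (rule p_le_partial)
  also have "(\<Prod>i\<le>N-1. fac t i) = (\<Prod>i<N. fac t i)"
    using N by (metis Suc_diff_1 lessThan_Suc_atMost less_le_trans zero_less_one)
  also have "\<dots> = (\<Prod>n=1..N. (sinc (aseq 1 n * t))^2)"
    unfolding fac_def by (simp add: prod.atLeast1_atMost_eq)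
  also have "\<dots> \<le> (\<Prod>n=1..N. exp (-2 * ln (aseq 1 n * t)))"
  proof (rule prod_mono)
    fix n assume "n \<in> {1..N}"
    hence y: "aseq 1 n * t > 0" using aseq_1_pos t by auto
    have "2 * ln (aseq 1 n * t) = ln ((aseq 1 n * t)^2)" using y by (simp add: ln_realpow)
    hence "exp (-2 * ln (aseq 1 n * t)) = exp (- ln ((aseq 1 n * t)^2))" by simp
    also have "\<dots> = 1 / (aseq 1 n * t)^2" using y by (auto simp: exp_minus inverse_eq_divide)
    finally have eq: "exp (-2 * ln (aseq 1 n * t)) = 1 / (aseq 1 n * t)^2" .
    have "aseq 1 n * t \<noteq> 0" using y by linarith
    thus "0 \<le> (sinc (aseq 1 n * t))^2 \<and> (sinc (aseq 1 n * t))^2 \<le> exp (-2 * ln (aseq 1 n * t))"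
      unfolding eq by (intro conjI zero_le_power2 sinc_sq_le_inverse_sq)
  qed
  also have "\<dots> = exp (-2 * (\<Sum>n=1..N. ln (aseq 1 n * t)))"
    by (simp add: exp_sum sum_distrib_left)
  finally show ?thesis .
qed

lemma ln_aseq_lower:
  assumes t: "t > 0" and n: "1 \<le> n" "n \<le> N" and N: "N \<ge> 3"
  shows "ln (aseq 1 n * t) \<ge> ln (A1 * t) - ln (real n) - 2 * ln (ln (real N))"
proof (cases "n = 1")
  case True
  have "ln (ln (real N)) \<ge> 0" using ln_ge_1[of N] N by simp
  thus ?thesis using True unfolding aseq_1_eq by simp
next
  case False
  hence n2: "n \<ge> 2" using n by auto
  have lnn: "ln (real n) > 0" using n2 by simp
  have "aseq 1 n * t = A1 * t / (real n * (ln (real n))^2)" unfolding aseq_1_eq using False by simp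
  hence "ln (aseq 1 n * t) = ln (A1 * t) - ln (real n) - 2 * ln (ln (real n))"
    using t A1_bounds lnn n2 by (simp add: ln_div ln_mult ln_realpow)
  moreover have "ln (ln (real n)) \<le> ln (ln (real N))" using lnn n by simp
  ultimately show ?thesis by simp
qed

lemma p_le_truncated:
  assumes t: "t > 0" and N: "N \<ge> 3" and Nx: "real N * (ln (real N))^2 \<le> A1 * t"
  shows "p t \<le> exp (-2 * (real N - 1 - ln (real N)))"
proof -
  define x where "x = A1 * t"
  have x0: "x > 0" using t A1_bounds unfolding x_def by simp
  have lnN1: "ln (real N) \<ge> 1" using ln_ge_1[of N] N by simp
  have "(\<Sum>n=1..N. ln (aseq 1 n * t)) \<ge> (\<Sum>n=1..N. (ln x - 2 * ln (ln (real N))) - ln (real n))"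
  proof (rule sum_mono)
    fix n assume "n \<in> {1..N}"
    hence "ln (aseq 1 n * t) \<ge> ln x - ln (real n) - 2 * ln (ln (real N))"
      unfolding x_def by (intro ln_aseq_lower[OF t _ _ N]) auto
    thus "(ln x - 2 * ln (ln (real N))) - ln (real n) \<le> ln (aseq 1 n * t)" by linarith
  qed
  also have "(\<Sum>n=1..N. (ln x - 2 * ln (ln (real N))) - ln (real n))
      = real N * (ln x - 2 * ln (ln (real N))) - (\<Sum>n=1..N. ln (real n))"
    by (simp add: sum_subtractf)
  finally have sum_ge: "(\<Sum>n=1..N. ln (aseq 1 n * t)) \<ge>
      real N * (ln x - 2 * ln (ln (real N))) - (real N * ln (real N) - real N + 1 + ln (real N))"
    using sum_ln_le[of N] N by simp
  have "ln (real N * (ln (real N))^2) \<le> ln x"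
    using Nx x0 N lnN1 unfolding x_def by (subst ln_le_cancel_iff) auto
  hence "ln (real N) + 2 * ln (ln (real N)) \<le> ln x"
    using N lnN1 by (simp add: ln_mult ln_realpow)
  hence "real N * (ln x - 2 * ln (ln (real N)) - ln (real N)) \<ge> 0" by simp
  hence "(\<Sum>n=1..N. ln (aseq 1 n * t)) \<ge> real N - 1 - ln (real N)"
    using sum_ge by (simp add: algebra_simps)
  hence "exp (-2 * (\<Sum>n=1..N. ln (aseq 1 n * t))) \<le> exp (-2 * (real N - 1 - ln (real N)))" by simp
  thus ?thesis using p_le_exp_sum[OF t, of N] N by linarith
qed

text \<open>The truncation point \<open>q = x / ln\<^sup>2 x\<close> is at least \<open>3\<close> once \<open>x \<ge> 1369 = 37\<^sup>2\<close>.\<close>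
lemma truncation_point_ge_3:
  fixes x :: real assumes x: "x \<ge> 1369" shows "x / (ln x)^2 \<ge> 3"
proof -
  define s where "s = sqrt x"
  have s37: "s \<ge> 37" using x real_sqrt_le_mono[of 1369 x] unfolding s_def by simp
  have xs: "x = s^2" using x unfolding s_def by simp
  have lxp: "(ln x)^2 > 0" using x by simp
  have "x / (ln x)^2 \<ge> x / (8/3 * s)"
    using lxp ln_sq_le_sqrt[of x] x unfolding s_def by (intro divide_left_mono) auto
  also have "x / (8/3 * s) = 3/8 * s" using s37 unfolding xs by (simp add: power2_eq_square)
  finally show ?thesis using s37 by linarith
qed

lemma p_decay:
  assumes t: "t \<ge> 10000"
  shows "p t \<le> exp 4 / 4 * t^2 * E t"
proof -
  define x where "x = A1 * t"
  have "(1/7) * 10000 \<le> A1 * t" using t A1_bounds by (intro mult_mono) auto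
  hence x1: "x \<ge> 1369" unfolding x_def by simp
  have "A1 * t \<le> (1/2) * t" using t A1_bounds by (intro mult_right_mono) auto
  hence xt: "x \<le> t / 2" unfolding x_def by simp
  have lx1: "ln x \<ge> 1" using ln_ge_1[of x] x1 by simp
  have lxp: "(ln x)^2 > 0" using lx1 by simp
  define q where "q = x / (ln x)^2"
  have q3: "q \<ge> 3" unfolding q_def using truncation_point_ge_3[OF x1] .
  define N where "N = nat \<lfloor>q\<rfloor>"
  have NqA: "real N \<le> q" and NqB: "real N > q - 1" and N3: "N \<ge> 3"
    using q3 unfolding N_def by linarith+
  have qx: "q \<le> x" unfolding q_def using lx1 x1 by (simp add: divide_le_eq one_le_power)
  have lnN: "ln (real N) \<le> ln x" using NqA qx N3 by simp
  have "real N * (ln (real N))^2 \<le> q * (ln x)^2"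
    using NqA lnN N3 q3 by (intro mult_mono power_mono) auto
  also have "\<dots> = x" unfolding q_def using lxp by simp
  finally have "p t \<le> exp (-2 * (real N - 1 - ln (real N)))"
    using t unfolding x_def by (intro p_le_truncated N3) auto
  also have "\<dots> \<le> exp (-2 * (q - 2 - ln x))" using NqB lnN by simp
  also have "exp (-2 * (q - 2 - ln x)) = exp 4 * exp (ln x) ^ 2 * exp (-2 * q)"
    by (simp add: exp_add[symmetric] exp_of_nat_mult[symmetric] algebra_simps)
  also have "\<dots> = exp 4 * x^2 * exp (-2 * q)" using x1 by simp
  also have "\<dots> \<le> exp 4 * (t/2)^2 * E t"
  proof (intro mult_mono)
    show "x^2 \<le> (t/2)^2" using xt x1 by (intro power_mono) auto
    have "(ln x)^2 \<le> (ln t)^2" using xt x1 lx1 by (intro power_mono) auto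
    moreover have "(ln t)^2 > 0" using t by simp
    ultimately have "x / (ln t)^2 \<le> q" unfolding q_def using lxp x1 by (intro divide_left_mono) auto
    moreover have "(2/7) * t \<le> 2 * x"
      using mult_right_mono[OF A1_bounds(1), of t] t unfolding x_def by simp
    hence "(2/7) * t / (ln t)^2 \<le> 2 * x / (ln t)^2" by (rule divide_right_mono) simp
    ultimately show "exp (-2 * q) \<le> E t" unfolding E_eq by simp
  qed (auto simp: E_eq)
  finally show ?thesis by (simp add: power_divide)
qed


section \<open>Tail integrals\<close>

lemma set_integral_Ici_Ioi:
  fixes g :: "real \<Rightarrow> real"
  assumes g: "g \<in> borel_measurable borel" and int: "set_integrable lborel {a<..} g"
  shows "set_integrable lborel {a..} g" "(LINT x:{a..}|lborel. g x) = (LINT x:{a<..}|lborel. g x)"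
proof -
  have ae: "AE x in lborel. indicator {a<..} x *\<^sub>R g x = indicator {a..} x *\<^sub>R g x"
    by (rule AE_mp[OF AE_lborel_singleton[of a]], rule AE_I2) (auto simp: indicator_def)
  have m1: "(\<lambda>x. indicator {a..} x *\<^sub>R g x) \<in> borel_measurable lborel"
   and m2: "(\<lambda>x. indicator {a<..} x *\<^sub>R g x) \<in> borel_measurable lborel"
    using g by measurable
  show "set_integrable lborel {a..} g"
    using integrable_cong_AE_imp[OF int[unfolded set_integrable_def] m1 ae]
    unfolding set_integrable_def .
  show "(LINT x:{a..}|lborel. g x) = (LINT x:{a<..}|lborel. g x)"
    unfolding set_lebesgue_integral_def using integral_cong_AE[OF m2 m1 ae] by simp
qed

lemma tail_integral_le_antiderivative:
  fixes F f g :: "real \<Rightarrow> real"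
  assumes deriv: "\<And>x. a < x \<Longrightarrow> ((\<lambda>s. - F s) has_real_derivative f x) (at x)"
    and f_cont: "\<And>x. a < x \<Longrightarrow> isCont f x"
    and F_cont: "isCont F a"
    and F_lim: "(F \<longlongrightarrow> 0) at_top"
    and c: "0 < c"
    and g_meas: "g \<in> borel_measurable borel"
    and g_bounds: "\<And>x. a < x \<Longrightarrow> 0 \<le> g x \<and> g x \<le> c * f x"
  shows "set_integrable lborel {a..} g" "(LINT x:{a..}|lborel. g x) \<le> c * F a"
proof -
  have f_nonneg: "0 \<le> f x" if "a < x" for x
  proof -
    have "0 \<le> c * f x" using g_bounds[OF that] by linarith
    thus ?thesis using c by (simp add: zero_le_mult_iff)
  qed
  have "(F \<longlongrightarrow> F a) (at a)" using F_cont by (simp add: isCont_def)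
  hence "(F \<longlongrightarrow> F a) (at_right a)" by (rule tendsto_mono[OF at_le, rotated]) simp
  hence lim_a: "(((\<lambda>s. - F s) \<circ> real_of_ereal) \<longlongrightarrow> - F a) (at_right (ereal a))"
    unfolding ereal_tendsto_simps by (rule tendsto_minus)
  have lim_inf: "(((\<lambda>s. - F s) \<circ> real_of_ereal) \<longlongrightarrow> - 0) (at_left \<infinity>)"
    unfolding ereal_tendsto_simps by (intro tendsto_minus F_lim)
  have deriv': "((\<lambda>s. - F s) has_real_derivative f x) (at x)"
    and cont': "isCont f x" if "ereal a < ereal x" "ereal x < \<infinity>" for x
    using deriv f_cont that by auto
  have nonneg': "AE x in lborel. ereal a < ereal x \<longrightarrow> ereal x < \<infinity> \<longrightarrow> 0 \<le> f x"
    using f_nonneg by (intro AE_I2) simp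
  note ftc = interval_integral_FTC_nonneg[OF _ deriv' cont' nonneg' lim_a lim_inf]
  have Ioi: "einterval (ereal a) \<infinity> = {a<..}" by (auto simp: einterval_def)
  have f_int: "set_integrable lborel {a<..} f" using ftc(1) unfolding Ioi by simp
  have f_val: "(LINT x:{a<..}|lborel. f x) = F a"
    using ftc(2) unfolding Ioi by (simp add: interval_lebesgue_integral_def)
  have cf_int: "set_integrable lborel {a<..} (\<lambda>x. c * f x)"
    using f_int by (rule set_integrable_mult_right)
  have g_int: "set_integrable lborel {a<..} g"
  proof (rule set_integrable_bound[OF cf_int])
    show "set_borel_measurable lborel {a<..} g"
      unfolding set_borel_measurable_def using g_meas by measurable
    show "AE x in lborel. x \<in> {a<..} \<longrightarrow> norm (g x) \<le> norm (c * f x)"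
      using g_bounds by (intro AE_I2 impI) (auto intro: order_trans[OF _ abs_ge_self])
  qed
  have "(LINT x:{a<..}|lborel. g x) \<le> (LINT x:{a<..}|lborel. c * f x)"
    using g_bounds by (intro set_integral_mono[OF g_int cf_int]) auto
  also have "\<dots> = c * F a" using f_val by (simp add: set_integral_mult_right)
  finally show "(LINT x:{a..}|lborel. g x) \<le> c * F a"
    using set_integral_Ici_Ioi(2)[OF g_meas g_int] by simp
  show "set_integrable lborel {a..} g" using set_integral_Ici_Ioi(1)[OF g_meas g_int] .
qed

definition F :: "nat \<Rightarrow> real \<Rightarrow> real" where "F k s = s^2 * (ln s)^k * E s"

definition dF :: "nat \<Rightarrow> real \<Rightarrow> real" where
  "dF k s = s * (ln s)^(k-2) * E s * ((2/7) * s * (ln s - 2) / ln s - 2 * (ln s)^2 - real k * ln s)"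

lemma F_nonneg: "s \<ge> 1 \<Longrightarrow> 0 \<le> F k s" unfolding F_def E_eq by simp

lemma F_measurable[measurable]: "F k \<in> borel_measurable borel"
  unfolding F_def[abs_def] E_eq by measurable

lemma F_isCont: "x > 1 \<Longrightarrow> isCont (F k) x"
  unfolding F_def[abs_def] E_eq by (intro continuous_intros) auto

lemma dF_isCont: "x > 1 \<Longrightarrow> isCont (dF k) x"
  unfolding dF_def[abs_def] E_eq by (intro continuous_intros) auto

lemma F_deriv:
  assumes s: "s > 1" and k: "k \<ge> 2"
  shows "((\<lambda>s. - F k s) has_real_derivative dF k s) (at s)"
proof -
  have l: "ln s > 0" using s by simp
  have "((\<lambda>s. - (s^2 * (ln s)^k * exp (-(2/7) * s / (ln s)^2))) has_real_derivative
     - (2 * s * (ln s)^k * E s + s^2 * (real k * (ln s)^(k-1) * (1/s)) * E s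
        + s^2 * (ln s)^k * (E s * (-(2/7) * ((ln s)^2 - s * (2 * ln s * (1/s))) / ((ln s)^2)^2)))) (at s)"
    using s l unfolding E_eq
    by (auto intro!: derivative_eq_intros simp: power2_eq_square field_simps)
  moreover obtain j where j: "k = j + 2" using k by (metis add.commute le_Suc_ex)
  have "- (2 * s * (ln s)^k * E s + s^2 * (real k * (ln s)^(k-1) * (1/s)) * E s
        + s^2 * (ln s)^k * (E s * (-(2/7) * ((ln s)^2 - s * (2 * ln s * (1/s))) / ((ln s)^2)^2)))
      = dF k s"
    unfolding dF_def j using s l by (simp add: field_simps power2_eq_square power_add)
  ultimately show ?thesis unfolding F_def E_eq by simp
qed

text \<open>Beyond \<open>10000\<close> the exponential decay dominates: \<open>F\<^sub>k\<^sub>-\<^sub>2 \<le> 14 (-F\<^sub>k)'\<close> for \<open>2 \<le> k \<le> 4\<close>.\<close>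
lemma F_le_dF:
  assumes s: "s \<ge> 10000" and k: "2 \<le> k" "k \<le> 4"
  shows "F (k-2) s \<le> 14 * dF k s"
proof -
  define L where "L = ln s"
  have L9: "L \<ge> 9" unfolding L_def using ln_ge_9 s .
  have Lsq: "L^2 \<le> 8/3 * sqrt s" unfolding L_def using s by (intro ln_sq_le_sqrt) auto
  have sq: "sqrt s \<ge> 100" using s real_sqrt_le_mono[of 10000 s] by simp
  have ss: "sqrt s * sqrt s = s" using s by simp
  have B1: "(2/7) * s * (L - 2) / L \<ge> s / 7"
  proof -
    have "(L - 2) / L \<ge> 1/2" using L9 by (simp add: field_simps)
    hence "(2/7 * s) * ((L - 2) / L) \<ge> (2/7 * s) * (1/2)" using s by (intro mult_left_mono) auto
    thus ?thesis by simp
  qed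
  have B2: "2 * L^2 + real k * L \<le> 22/9 * L^2"
  proof -
    have "real k * L \<le> 4 * L" using k L9 by (intro mult_right_mono) auto
    also have "4 * L \<le> 4/9 * L^2" using L9 by (simp add: power2_eq_square)
    finally show ?thesis by simp
  qed
  have B3: "22/9 * L^2 \<le> s / 14"
  proof -
    have "22/9 * L^2 \<le> 22/9 * (8/3 * sqrt s)" using Lsq by simp
    also have "\<dots> \<le> sqrt s * sqrt s / 14"
    proof -
      have "(176/27 * 14) * sqrt s \<le> sqrt s * sqrt s" using sq s by (intro mult_right_mono) auto
      thus ?thesis by simp
    qed
    finally show ?thesis using ss by simp
  qed
  have "(2/7) * s * (L - 2) / L - 2 * L^2 - real k * L \<ge> s / 14" using B1 B2 B3 by linarith
  moreover have "s * L^(k-2) * E s \<ge> 0" using L9 s unfolding E_eq by simp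
  ultimately have "s * L^(k-2) * E s * (s / 14) \<le> dF k s"
    unfolding dF_def L_def[symmetric] by (intro mult_left_mono) auto
  thus ?thesis unfolding F_def L_def by (simp add: power2_eq_square mult_ac)
qed

lemma F_tendsto_0: assumes "k \<le> 4" shows "(F k \<longlongrightarrow> 0) at_top"
proof (rule tendsto_sandwich[of "\<lambda>_. 0" _ _ "F 4"])
  have "((\<lambda>s::real. s^2 * (ln s)^4 * exp (-(2/7) * s / (ln s)^2)) \<longlongrightarrow> 0) at_top"
    by real_asymp
  thus "(F 4 \<longlongrightarrow> 0) at_top" unfolding F_def[abs_def] E_eq .
  show "\<forall>\<^sub>F s in at_top. 0 \<le> F k s"
    using eventually_ge_at_top[of 1] by eventually_elim (rule F_nonneg)
  show "\<forall>\<^sub>F s in at_top. F k s \<le> F 4 s"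
    using eventually_ge_at_top[of 3]
  proof eventually_elim
    case (elim s)
    have "(ln s)^k \<le> (ln s)^4" using ln_ge_1[OF elim] assms by (intro power_increasing) auto
    thus ?case unfolding F_def E_eq using elim by (intro mult_right_mono mult_left_mono) auto
  qed
qed simp

lemma F_tail_integral:
  assumes a: "a \<ge> 10000" and k: "2 \<le> k" "k \<le> 4"
  shows "set_integrable lborel {a..} (F (k-2))" "(LINT s:{a..}|lborel. F (k-2) s) \<le> 14 * F k a"
proof -
  have deriv: "((\<lambda>s. - F k s) has_real_derivative dF k x) (at x)" if "a < x" for x
    using F_deriv[of x k] that a k by simp
  have cont: "isCont (dF k) x" if "a < x" for x using dF_isCont[of x k] that a by simp
  have cont_a: "isCont (F k) a" using F_isCont[of a k] a by simp
  have bounds: "0 \<le> F (k-2) x \<and> F (k-2) x \<le> 14 * dF k x" if "a < x" for x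
    using F_nonneg[of x "k-2"] F_le_dF[of x k] that a k by simp
  have c: "(0::real) < 14" by simp
  note tail = tail_integral_le_antiderivative[OF deriv cont cont_a F_tendsto_0[OF k(2)] c
      F_measurable bounds]
  show "set_integrable lborel {a..} (F (k-2))" by (rule tail(1))
  show "(LINT s:{a..}|lborel. F (k-2) s) \<le> 14 * F k a" by (rule tail(2))
qed


definition Fw :: "real \<Rightarrow> real" where "Fw t = (LINT \<xi>:{t..}|lborel. w1 \<xi>)"

text \<open>Since \<open>0 \<le> w\<^sub>1 \<le> 1\<close>, \<open>Fw\<close> is antitone and \<open>1\<close>-Lipschitz.\<close>
lemma Fw_diff: assumes "s \<le> t" shows "0 \<le> Fw s - Fw t" "Fw s - Fw t \<le> t - s"
proof -
  have i1: "integrable lborel (\<lambda>x. indicator {s..} x * w1 x)"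
   and i2: "integrable lborel (\<lambda>x. indicator {t..} x * w1 x)"
    using w1_set_integrable[of "{s..}"] w1_set_integrable[of "{t..}"]
    unfolding set_integrable_def by simp_all
  have eq: "Fw s - Fw t = (LINT x|lborel. indicator {s..} x * w1 x - indicator {t..} x * w1 x)"
    unfolding Fw_def set_lebesgue_integral_def using i1 i2 by simp
  have pt: "0 \<le> indicator {s..} x * w1 x - indicator {t..} x * w1 x"
    "indicator {s..} x * w1 x - indicator {t..} x * w1 x \<le> indicator {s..t} x" for x
    using assms w1_nonneg[of x] w1_le_1[of x] by (auto simp: indicator_def)
  show "0 \<le> Fw s - Fw t" unfolding eq using pt(1) by (intro integral_nonneg_AE) auto
  have "Fw s - Fw t \<le> (LINT x|lborel. indicator {s..t} x)"
    unfolding eq by (rule integral_mono)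
      (use i1 i2 pt(2) assms in \<open>auto simp: integrable_indicator_iff emeasure_lborel_Icc\<close>)
  also have "\<dots> = t - s" using assms by simp
  finally show "Fw s - Fw t \<le> t - s" .
qed

lemma Fw_antimono: "s \<le> t \<Longrightarrow> Fw t \<le> Fw s" using Fw_diff(1) by fastforce

lemma Fw_continuous_on: "continuous_on A Fw"
proof (rule lipschitz_on_continuous_on[of 1], rule lipschitz_onI)
  fix x y :: real
  show "dist (Fw x) (Fw y) \<le> 1 * dist x y"
    using Fw_diff[of x y] Fw_diff[of y x] by (cases "x \<le> y") (auto simp: dist_real_def)
qed simp

lemma Fw_measurable[measurable]: "Fw \<in> borel_measurable borel"
  by (rule borel_measurable_continuous_onI[OF Fw_continuous_on])

lemma Fw_nonneg: "0 \<le> Fw t"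
  unfolding Fw_def set_lebesgue_integral_def using w1_nonneg
  by (intro integral_nonneg_AE) (auto simp: indicator_def)

text \<open>By evenness of \<open>w\<^sub>1\<close>, the left tail \<open>\<integral>\<^sub>-\<^sub>\<infinity>\<^sup>t w\<^sub>1\<close> equals \<open>Fw (-t)\<close>.\<close>
lemma integral_Iic_w1: "(LINT \<xi>:{..t}|lborel. w1 \<xi>) = Fw (-t)"
proof -
  have "(LINT x|lborel. indicator {..t} x * w1 x)
      = \<bar>-1\<bar> *\<^sub>R (LINT x|lborel. indicator {..t} (0 + (-1) * x) * w1 (0 + (-1) * x))"
    by (rule lborel_integral_real_affine) simp
  also have "(\<lambda>x. indicator {..t} (0 + (-1) * x) * w1 (0 + (-1) * x)) = (\<lambda>x. indicator {-t..} x * w1 x)"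
    by (rule ext) (auto simp: indicator_def w1_even)
  finally show ?thesis unfolding Fw_def set_lebesgue_integral_def by simp
qed

lemma W1_eq: "W 1 t = (if t \<ge> 0 then Fw t else - Fw (-t))"
  unfolding W_def Fw_def[symmetric] integral_Iic_w1 by simp

text \<open>The two halves of the unit mass of \<open>w\<^sub>1\<close> are equal, so \<open>Fw 0 = 1/2\<close>.\<close>
lemma Fw_0: "Fw 0 = 1/2"
proof -
  have i1: "integrable lborel (\<lambda>x. indicator {..<0::real} x * w1 x)"
   and i2: "integrable lborel (\<lambda>x. indicator {0::real..} x * w1 x)"
    using w1_set_integrable[of "{..<0}"] w1_set_integrable[of "{0..}"]
    unfolding set_integrable_def by simp_all
  have ae: "AE x in lborel. indicator {..<0::real} x * w1 x = indicator {..0} x * w1 x"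
    by (rule AE_mp[OF AE_lborel_singleton[of 0]], rule AE_I2) (auto simp: indicator_def)
  have "1 = (LINT x|lborel. w1 x)" using w1_integral by simp
  also have "\<dots> = (LINT x|lborel. indicator {..<0::real} x * w1 x + indicator {0..} x * w1 x)"
    by (rule Bochner_Integration.integral_cong) (auto simp: indicator_def)
  also have "\<dots> = (LINT x|lborel. indicator {..<0::real} x * w1 x) + Fw 0"
    unfolding Fw_def set_lebesgue_integral_def using i1 i2 by simp
  also have "(LINT x|lborel. indicator {..<0::real} x * w1 x) = (LINT x:{..0}|lborel. w1 x)"
    unfolding set_lebesgue_integral_def by (rule integral_cong_AE) (use ae in auto)
  also have "\<dots> = Fw 0" using integral_Iic_w1[of 0] by simp
  finally show ?thesis by simp
qed

lemma Fw_le_half: "t \<ge> 0 \<Longrightarrow> Fw t \<le> 1/2"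
  using Fw_antimono[of 0 t] Fw_0 by simp

text \<open>Tail of \<open>Fw\<close>: integrating the decay of \<open>p\<close> against the model tail \<open>F\<^sub>2\<close>.\<close>
lemma Fw_tail: assumes t: "t \<ge> 10000" shows "Fw t \<le> 7/2 * exp 4 * F 2 t"
proof -
  note tail = F_tail_integral[OF t, of 2, simplified]
  have "Fw t \<le> (LINT s:{t..}|lborel. exp 4 / 4 * F 0 s)"
    unfolding Fw_def
  proof (rule set_integral_mono[OF w1_set_integrable])
    show "set_integrable lborel {t..} (\<lambda>s. exp 4 / 4 * F 0 s)"
      using tail(1) by (rule set_integrable_mult_right)
    fix x assume "x \<in> {t..}"
    thus "w1 x \<le> exp 4 / 4 * F 0 x"
      using p_decay[of x] w1_le_p[of x] t unfolding F_def by simp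
  qed simp
  also have "\<dots> = exp 4 / 4 * (LINT s:{t..}|lborel. F 0 s)" by (simp add: set_integral_mult_right)
  also have "\<dots> \<le> exp 4 / 4 * (14 * F 2 t)" using tail(2) by (intro mult_left_mono) auto
  finally show ?thesis by (simp add: mult_ac)
qed

abbreviation W1 :: "real \<Rightarrow> real" where "W1 \<equiv> W 1"

lemma W1_measurable[measurable]: "W1 \<in> borel_measurable borel"
proof -
  have "W1 = (\<lambda>t. if t \<ge> 0 then Fw t else - Fw (-t))" by (rule ext) (simp add: W1_eq)
  also have "\<dots> \<in> borel_measurable borel" by measurable
  finally show ?thesis .
qed

lemma abs_W1: "\<bar>W1 t\<bar> = Fw \<bar>t\<bar>" using Fw_nonneg by (simp add: W1_eq)

lemma integrable_by_tail_envelope: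
  fixes h g :: "real \<Rightarrow> real"
  assumes h: "h \<in> borel_measurable borel" and g: "set_integrable lborel {a..} g"
    and near: "\<And>t. \<bar>t\<bar> \<le> a \<Longrightarrow> \<bar>h t\<bar> \<le> M"
    and far: "\<And>t. a \<le> \<bar>t\<bar> \<Longrightarrow> \<bar>h t\<bar> \<le> g \<bar>t\<bar>"
  shows "integrable lborel h"
proof -
  define G where "G t = indicator {a..} t * \<bar>g t\<bar>" for t :: real
  have G: "integrable lborel G"
    using set_integrable_abs[OF g] unfolding G_def set_integrable_def by simp
  have G_refl: "integrable lborel (\<lambda>t. G (0 + (-1) * t))"
    by (rule lborel_integrable_real_affine[OF G]) simp
  have box: "integrable lborel (\<lambda>t. indicator {-a..a} t * \<bar>M\<bar>)"
    by (intro integrable_mult_left) (auto simp: integrable_indicator_iff emeasure_lborel_Icc_eq)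
  have G_nonneg: "0 \<le> G t" for t unfolding G_def by simp
  have bound: "\<bar>h t\<bar> \<le> indicator {-a..a} t * \<bar>M\<bar> + G t + G (0 + (-1) * t)" for t
  proof (cases "\<bar>t\<bar> \<le> a")
    case True
    thus ?thesis using near[OF True] G_nonneg[of t] G_nonneg[of "-t"] by (auto simp: indicator_def)
  next
    case False
    hence "\<bar>h t\<bar> \<le> \<bar>g \<bar>t\<bar>\<bar>" using far[of t] by simp
    thus ?thesis using False G_nonneg[of t] G_nonneg[of "-t"]
      by (cases "t \<ge> 0") (auto simp: G_def indicator_def)
  qed
  show ?thesis
  proof (rule Bochner_Integration.integrable_bound[OF Bochner_Integration.integrable_add[OF
        Bochner_Integration.integrable_add[OF box G] G_refl]])
    show "AE t in lborel. norm (h t) \<le> norm (indicator {-a..a} t * \<bar>M\<bar> + G t + G (0 + (-1) * t))"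
      using bound G_nonneg by (intro AE_I2) (auto intro: order_trans[OF _ abs_ge_self])
  qed (use h in measurable)
qed

lemma W1_integrable: "integrable lborel W1"
proof (rule integrable_by_tail_envelope[where a=10000 and M="1/2"])
  show "set_integrable lborel {10000..} (\<lambda>t. 7/2 * exp 4 * F 2 t)"
    using F_tail_integral(1)[of 10000 4] by (intro set_integrable_mult_right) simp
  show "\<bar>W1 t\<bar> \<le> 1/2" for t unfolding abs_W1 by (rule Fw_le_half) simp
  show "\<bar>W1 t\<bar> \<le> 7/2 * exp 4 * F 2 \<bar>t\<bar>" if "10000 \<le> \<bar>t\<bar>" for t
    unfolding abs_W1 using that by (rule Fw_tail)
qed simp

definition I1 :: "real \<Rightarrow> real" where "I1 s = (LINT \<xi>:{s..}|lborel. W1 \<xi>)"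

lemma W1_set_integrable: "A \<in> sets lborel \<Longrightarrow> set_integrable lborel A W1"
  unfolding set_integrable_def by (intro integrable_mult_indicator W1_integrable)

lemma I1_bounds: assumes s: "s > 0"
  shows "0 \<le> I1 s" "I1 s \<le> (LINT t|lborel. \<bar>W1 t\<bar>)"
proof -
  show "0 \<le> I1 s" unfolding I1_def set_lebesgue_integral_def using s Fw_nonneg
    by (intro integral_nonneg_AE) (auto simp: indicator_def W1_eq)
  show "I1 s \<le> (LINT t|lborel. \<bar>W1 t\<bar>)"
    unfolding I1_def set_lebesgue_integral_def
  proof (rule integral_mono)
    show "integrable lborel (\<lambda>x. indicat_real {s..} x *\<^sub>R W1 x)"
      using W1_set_integrable[of "{s..}"] unfolding set_integrable_def by simp
  qed (auto simp: indicator_def intro: integrable_abs W1_integrable)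
qed

lemma I1_tail: assumes s: "s \<ge> 10000" shows "I1 s \<le> 49 * exp 4 * F 4 s"
proof -
  note tail = F_tail_integral[OF s, of 4, simplified]
  have "I1 s \<le> (LINT x:{s..}|lborel. 7/2 * exp 4 * F 2 x)"
    unfolding I1_def
  proof (rule set_integral_mono[OF W1_set_integrable])
    show "set_integrable lborel {s..} (\<lambda>x. 7/2 * exp 4 * F 2 x)"
      using tail(1) by (rule set_integrable_mult_right)
    fix x assume "x \<in> {s..}"
    thus "W1 x \<le> 7/2 * exp 4 * F 2 x" using Fw_tail[of x] s by (simp add: W1_eq)
  qed simp
  also have "\<dots> = 7/2 * exp 4 * (LINT x:{s..}|lborel. F 2 x)" by (simp add: set_integral_mult_right)
  also have "\<dots> \<le> 7/2 * exp 4 * (14 * F 4 s)" using tail(2) by (intro mult_left_mono) auto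
  finally show ?thesis by simp
qed

section \<open>Scaling from \<open>\<gamma> = 1\<close> to general \<open>\<gamma>\<close>\<close>

lemma set_integral_rescale:
  fixes f g :: "real \<Rightarrow> real"
  assumes \<gamma>: "\<gamma> > 0" and fg: "\<And>x. f x = \<gamma> * g (\<gamma> * x)" and AB: "\<And>x. x \<in> A \<longleftrightarrow> \<gamma> * x \<in> B"
  shows "(LINT x:A|lborel. f x) = (LINT y:B|lborel. g y)"
proof -
  have "(LINT y:B|lborel. g y) = (LINT x|lborel. \<gamma> * (indicator B (\<gamma> * x) * g (\<gamma> * x)))"
    unfolding set_lebesgue_integral_def
    using lborel_integral_scale[OF \<gamma>, of "\<lambda>y. indicator B y * g y"] by simp
  also have "\<dots> = (LINT x|lborel. indicator A x * f x)"
    using AB fg by (intro Bochner_Integration.integral_cong) (auto simp: indicator_def)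
  finally show ?thesis unfolding set_lebesgue_integral_def by simp
qed

lemma W_scale: assumes \<gamma>: "\<gamma> > 0" shows "W \<gamma> t = W1 (\<gamma> * t)"
proof -
  have "(LINT x:{t..}|lborel. w \<gamma> x) = (LINT x:{\<gamma> * t..}|lborel. w1 x)"
    by (rule set_integral_rescale[OF \<gamma>]) (use \<gamma> in \<open>auto simp: w_scale[OF \<gamma>]\<close>)
  moreover have "(LINT x:{..t}|lborel. w \<gamma> x) = (LINT x:{..\<gamma> * t}|lborel. w1 x)"
    by (rule set_integral_rescale[OF \<gamma>]) (use \<gamma> in \<open>auto simp: w_scale[OF \<gamma>]\<close>)
  ultimately show ?thesis unfolding W_def using \<gamma> by (simp add: zero_le_mult_iff)
qed

lemma Iint_scale: assumes \<gamma>: "\<gamma> > 0" shows "Iint \<gamma> t = I1 (\<gamma> * t) / \<gamma>"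
proof -
  have "(LINT x:{t..}|lborel. \<gamma> * W \<gamma> x) = I1 (\<gamma> * t)"
    unfolding I1_def using \<gamma> by (intro set_integral_rescale) (auto simp: W_scale[OF \<gamma>])
  thus ?thesis unfolding Iint_def using \<gamma> by (simp add: set_integral_mult_right field_simps)
qed

lemma L1_norm_W_scale: assumes \<gamma>: "\<gamma> > 0"
  shows "(LINT t|lborel. \<bar>W \<gamma> t\<bar>) = (LINT t|lborel. \<bar>W1 t\<bar>) / \<gamma>"
  using lborel_integral_scale[OF \<gamma>, of "\<lambda>y. \<bar>W1 y\<bar>"] \<gamma> by (simp add: W_scale[OF \<gamma>])

lemma W_integrable: assumes \<gamma>: "\<gamma> > 0" shows "integrable lborel (W \<gamma>)"
proof -
  have "integrable lborel (\<lambda>x. W1 (0 + \<gamma> * x))"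
    using \<gamma> by (intro lborel_integrable_real_affine W1_integrable) simp
  moreover have "W \<gamma> = (\<lambda>x. W1 (0 + \<gamma> * x))" using W_scale[OF \<gamma>] by auto
  ultimately show ?thesis by simp
qed


lemma greatest_level_point:
  fixes h :: "real \<Rightarrow> real"
  assumes cont: "continuous_on {b..} h" and lim: "(h \<longlongrightarrow> 0) at_top"
    and c: "c > 0" and ab: "b \<le> a" and above: "h a \<ge> c"
  shows "\<exists>x\<ge>a. h x = c \<and> (\<forall>y\<ge>b. h y = c \<longrightarrow> y \<le> x)"
proof -
  obtain M where M: "\<And>x. x \<ge> M \<Longrightarrow> h x < c"
    using order_tendstoD(2)[OF lim c] by (auto simp: eventually_at_top_linorder)
  define M' where "M' = max M (a + 1)"
  have hM': "h M' < c" using M unfolding M'_def by simp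
  have "continuous_on {a..M'} h" by (rule continuous_on_subset[OF cont]) (use ab in auto)
  then obtain x0 where x0: "a \<le> x0" "x0 \<le> M'" "h x0 = c"
    using IVT2'[of h M' c a] hM' above unfolding M'_def by fastforce
  define S where "S = {b..M'} \<inter> h -` {c}"
  have S_closed: "closed S" unfolding S_def
    using continuous_on_subset[OF cont, of "{b..M'}"] by (intro continuous_closed_preimage) auto
  have x0S: "x0 \<in> S" and S_bdd: "bdd_above S" using x0 ab unfolding S_def by auto
  have SupS: "Sup S \<in> S" using closed_contains_Sup[OF _ S_bdd S_closed] x0S by auto
  show ?thesis
  proof (intro exI[of _ "Sup S"] conjI allI impI)
    show "a \<le> Sup S" using cSup_upper[OF x0S S_bdd] x0 by simp
    show "h (Sup S) = c" using SupS unfolding S_def by simp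
    fix y assume y: "b \<le> y" "h y = c"
    have "y \<le> M'" using M[of y] y unfolding M'_def by (cases "y \<ge> M") auto
    hence "y \<in> S" using y unfolding S_def by auto
    thus "y \<le> Sup S" by (rule cSup_upper[OF _ S_bdd])
  qed
qed

definition hW :: "real \<Rightarrow> real" where "hW \<eta> = 35 * exp 2 * \<eta>^4 * u (2/7) \<eta>"

lemma hW_10000: "hW 10000 \<ge> 1/2"
proof -
  have "(9::real)^2 \<le> (ln 10000)^2" using ln_ge_9[of 10000] by (intro power_mono) auto
  hence "(2/7) * 10000 / (ln (10000::real))^2 \<le> (2/7) * 10000 / 81"
    by (intro divide_left_mono) auto
  hence "-(2/7) * 10000 / (ln (10000::real))^2 \<ge> -36" by simp
  hence "u (2/7) 10000 \<ge> exp (-36)" unfolding u_def by simp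
  moreover have "(exp 1)^36 \<le> (3::real)^36" by (rule power_mono[OF exp_le]) simp
  hence "exp (36::real) \<le> 3^36" by (simp add: exp_of_nat_mult[symmetric])
  hence "exp (-36::real) \<ge> 1 / 3^36" by (simp add: exp_minus inverse_eq_divide divide_left_mono)
  ultimately have "hW 10000 \<ge> 35 * 1 * 10000^4 * (1 / 3^36)"
    unfolding hW_def by (intro mult_mono) auto
  thus ?thesis by simp
qed

lemma etaStar_ge: "etaStar \<ge> 10000"
proof -
  have cont: "continuous_on {2..} hW"
    unfolding hW_def[abs_def] u_def by (intro continuous_intros) auto
  have "((\<lambda>\<eta>::real. 35 * exp 2 * \<eta>^4 * exp (- (2/7) * \<eta> / (ln \<eta>)^2)) \<longlongrightarrow> 0) at_top"
    by real_asymp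
  hence lim: "(hW \<longlongrightarrow> 0) at_top" unfolding hW_def[abs_def] u_def .
  obtain x where x: "x \<ge> 10000" "hW x = 1/2" and greatest: "\<And>y. y \<ge> 2 \<Longrightarrow> hW y = 1/2 \<Longrightarrow> y \<le> x"
    using greatest_level_point[OF cont lim _ _ hW_10000] by auto
  have "etaStar = x"
    unfolding etaStar_def
  proof (rule Greatest_equality)
    show "x > 1 \<and> 35 * exp 2 * x^4 * u (2/7) x = 1/2" using x unfolding hW_def by simp
    fix y assume "y > 1 \<and> 35 * exp 2 * y^4 * u (2/7) y = 1/2"
    thus "y \<le> x" using greatest[of y] x unfolding hW_def by (cases "y \<ge> 2") auto
  qed
  thus ?thesis using x by simp
qed

lemma F2_tail_le_envelope:
  assumes "\<eta> \<ge> 10000" shows "7/2 * exp 4 * F 2 \<eta> \<le> 35 * exp 2 * \<eta>^4 * u (2/7) \<eta>"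
proof -
  have "ln \<eta> \<le> \<eta>" using assms by (intro ln_le_minus_one[THEN order_trans]) auto
  hence "(ln \<eta>)^2 \<le> \<eta>^2" using assms by (intro power_mono) auto
  hence "exp 2 * (ln \<eta>)^2 \<le> 8 * \<eta>^2" using exp_2_bounds(2) by (intro mult_mono) auto
  hence "7/2 * exp 2 * (ln \<eta>)^2 \<le> 35 * \<eta>^2" using zero_le_power2[of \<eta>] by linarith
  hence le: "(7/2 * exp 2 * (ln \<eta>)^2) * (exp 2 * \<eta>^2 * E \<eta>) \<le> (35 * \<eta>^2) * (exp 2 * \<eta>^2 * E \<eta>)"
    by (intro mult_right_mono) (auto simp: E_eq)
  have e4: "exp (4::real) = exp 2 * exp 2" by (simp add: exp_add[symmetric])
  have p4: "\<eta>^4 = \<eta>^2 * \<eta>^2" by (simp flip: power_add)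
  have L: "7/2 * exp 4 * F 2 \<eta> = (7/2 * exp 2 * (ln \<eta>)^2) * (exp 2 * \<eta>^2 * E \<eta>)"
    unfolding F_def e4 by (simp only: mult_ac)
  have R: "35 * exp 2 * \<eta>^4 * u (2/7) \<eta> = (35 * \<eta>^2) * (exp 2 * \<eta>^2 * E \<eta>)"
    unfolding p4 by (simp only: mult_ac)
  show ?thesis unfolding L R by (rule le)
qed

lemma F4_tail_le_envelope:
  assumes "\<eta> \<ge> 10000" shows "49 * exp 4 * F 4 \<eta> \<le> 130 * exp 2 * \<eta>^10 * u (2/7) \<eta>"
proof -
  have "ln \<eta> \<le> \<eta>" using assms by (intro ln_le_minus_one[THEN order_trans]) auto
  hence l4: "(ln \<eta>)^4 \<le> \<eta>^4" using assms by (intro power_mono) auto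
  have "(2::real)^4 \<le> \<eta>^4" using assms by (intro power_mono) auto
  hence "392 \<le> 130 * \<eta>^4" by simp
  have "exp 2 * 49 * (ln \<eta>)^4 \<le> 8 * 49 * \<eta>^4" using exp_2_bounds(2) l4 by (intro mult_mono) auto
  also have "\<dots> \<le> 130 * \<eta>^4 * \<eta>^4" using \<open>392 \<le> 130 * \<eta>^4\<close> by (intro mult_right_mono) auto
  finally have le: "(exp 2 * 49 * (ln \<eta>)^4) * (exp 2 * \<eta>^2 * E \<eta>)
      \<le> (130 * \<eta>^4 * \<eta>^4) * (exp 2 * \<eta>^2 * E \<eta>)"
    by (intro mult_right_mono) (auto simp: E_eq)
  have e4: "exp (4::real) = exp 2 * exp 2" by (simp add: exp_add[symmetric])
  have p10: "\<eta>^10 = \<eta>^4 * \<eta>^4 * \<eta>^2" by (simp flip: power_add)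
  have L: "49 * exp 4 * F 4 \<eta> = (exp 2 * 49 * (ln \<eta>)^4) * (exp 2 * \<eta>^2 * E \<eta>)"
    unfolding F_def e4 by (simp only: mult_ac)
  have R: "130 * exp 2 * \<eta>^10 * u (2/7) \<eta> = (130 * \<eta>^4 * \<eta>^4) * (exp 2 * \<eta>^2 * E \<eta>)"
    unfolding p10 by (simp only: mult_ac)
  show ?thesis unfolding L R by (rule le)
qed

lemma Fw_le_GW: assumes "\<eta> \<ge> 0" shows "Fw \<eta> \<le> GW \<eta>"
proof (cases "\<eta> \<le> etaStar")
  case True thus ?thesis unfolding GW_def using Fw_le_half[OF assms] by simp
next
  case False
  hence "\<eta> \<ge> 10000" using etaStar_ge by simp
  hence "Fw \<eta> \<le> 35 * exp 2 * \<eta>^4 * u (2/7) \<eta>"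
    using Fw_tail F2_tail_le_envelope by (meson order_trans)
  thus ?thesis unfolding GW_def using False by simp
qed

text \<open>The constant of part (iii): \<open>KW = 2 \<parallel>W\<^sub>1\<parallel>\<^sub>1\<close>, chosen so that \<open>I\<^sub>1 \<le> KW/2\<close> on \<open>(0, \<infinity>)\<close>.\<close>
definition KW :: real where "KW = 2 * (LINT t|lborel. \<bar>W1 t\<bar>)"

lemma I1_le_GI: assumes "\<zeta> > 0" and \<gamma>: "\<gamma> > 0" shows "I1 \<zeta> \<le> \<gamma> * GI KW 10000 \<gamma> \<zeta>"
proof (cases "\<zeta> \<le> 10000")
  case True
  thus ?thesis using I1_bounds(2)[OF assms(1)] \<gamma> unfolding GI_def KW_def by simp
next
  case False
  hence "I1 \<zeta> \<le> 130 * exp 2 * \<zeta>^10 * u (2/7) \<zeta>"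
    using I1_tail[of \<zeta>] F4_tail_le_envelope[of \<zeta>] by simp
  thus ?thesis using \<gamma> False unfolding GI_def by simp
qed

context
  fixes \<gamma> :: real assumes \<gamma>: "\<gamma> > 0"
begin

lemma abs_W: "\<bar>W \<gamma> t\<bar> = Fw (\<gamma> * \<bar>t\<bar>)"
  using W_scale[OF \<gamma>, of t] abs_W1[of "\<gamma> * t"] \<gamma> by (simp add: abs_mult)

lemma W_odd: "t \<noteq> 0 \<Longrightarrow> W \<gamma> (- t) = - W \<gamma> t"
  using \<gamma> by (simp add: W_scale[OF \<gamma>] W1_eq)

lemma W_0: "W \<gamma> 0 = 1/2"
  by (simp add: W_scale[OF \<gamma>] W1_eq Fw_0)

lemma abs_W_le_half: "\<bar>W \<gamma> t\<bar> \<le> 1/2"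
  unfolding abs_W using \<gamma> by (intro Fw_le_half) auto

lemma W_bounded: "bounded (range (W \<gamma>))"
  unfolding bounded_iff using abs_W_le_half by (intro exI[of _ "1/2"]) auto

lemma SUP_abs_W: "(SUP t. \<bar>W \<gamma> t\<bar>) = 1/2"
  by (rule cSup_eq_maximum) (use abs_W_le_half W_0 in \<open>auto intro: range_eqI[of _ _ 0]\<close>)

lemma abs_W_continuous_on: "continuous_on {0..} (\<lambda>t. \<bar>W \<gamma> t\<bar>)"
proof -
  have "continuous_on {0..} (\<lambda>t. Fw (\<gamma> * t))"
    by (rule continuous_on_compose2[OF Fw_continuous_on[of UNIV]]) (auto intro!: continuous_intros)
  thus ?thesis by (rule continuous_on_cong[THEN iffD1, rotated 2]) (auto simp: abs_W)
qed

lemma abs_W_antimono: "antimono_on {0..} (\<lambda>t. \<bar>W \<gamma> t\<bar>)"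
  unfolding monotone_on_def abs_W using \<gamma> by (auto intro!: Fw_antimono mult_left_mono)

lemma abs_W_le_GW: "\<bar>W \<gamma> t\<bar> \<le> GW (\<gamma> * \<bar>t\<bar>)"
  unfolding abs_W using \<gamma> by (intro Fw_le_GW) auto

lemma L1_norm_W: "(LINT t|lborel. \<bar>W \<gamma> t\<bar>) \<le> KW / \<gamma>"
  unfolding L1_norm_W_scale[OF \<gamma>] KW_def using \<gamma> by (simp add: divide_right_mono)

lemma Iint_le_GI: "t > 0 \<Longrightarrow> \<bar>Iint \<gamma> t\<bar> \<le> GI KW 10000 \<gamma> (\<gamma> * \<bar>t\<bar>)"
  using I1_bounds(1)[of "\<gamma> * t"] I1_le_GI[of "\<gamma> * t" \<gamma>] \<gamma>
  by (simp add: Iint_scale[OF \<gamma>] divide_le_eq mult.commute)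

end

theorem mainTheorem4:
  shows "\<exists>K \<zeta>s. \<zeta>s > 0 \<and> (\<forall>\<gamma>::real. \<gamma> > 0 \<longrightarrow>
      bounded (range (W \<gamma>))
    \<and> (\<forall>t. t \<noteq> 0 \<longrightarrow> W \<gamma> (- t) = - W \<gamma> t)
    \<and> integrable lborel (W \<gamma>)
    \<and> continuous_on {0..} (\<lambda>t. \<bar>W \<gamma> t\<bar>)
    \<and> antimono_on {0..} (\<lambda>t. \<bar>W \<gamma> t\<bar>)
    \<and> (SUP t. \<bar>W \<gamma> t\<bar>) = 1/2 \<and> W \<gamma> 0 = 1/2
    \<and> (\<forall>t. \<bar>W \<gamma> t\<bar> \<le> GW (\<gamma> * \<bar>t\<bar>))
    \<and> (LINT t|lborel. \<bar>W \<gamma> t\<bar>) \<le> K / \<gamma>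
    \<and> (\<forall>t>0. \<bar>Iint \<gamma> t\<bar> \<le> GI K \<zeta>s \<gamma> (\<gamma> * \<bar>t\<bar>)))"
  using W_bounded W_odd W_integrable abs_W_continuous_on abs_W_antimono SUP_abs_W W_0
    abs_W_le_GW L1_norm_W Iint_le_GI
  by (intro exI[of _ KW] exI[of _ "10000::real"]) simp

end
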